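(* In the setting of the context, let $n$ be an iteration index with $R_n=\|Ax_n-y\|\neq0$. Then there exist $t\in\mathbb{R}^{N_n}$ and $S_n>0$ with $h_n(t)\le h_n(0)-S_n$; equivalently, for every $z\in M$ the next iterate satisfies $D_p(x_{n+1},z)\le D_p(x_n,z)-S_n$.
   Context: $X$ is a real smooth, uniformly convex Banach space, $Y$ a real Banach space, $A:X\to Y$ bounded linear with adjoint $A^*$, $y\in\mathcal{R}(A)$, $M=\{x:Ax=y\}$. Fix $p,r\in(1,\infty)$, $p^*=p/(p-1)$. $J_p:X\to X^*$ is the duality mapping with gauge $t^{p-1}$ ($\langle J_p(x),x\rangle=\|x\|^p$, $\|J_p(x)\|=\|x\|^{p-1}$), $J_{p^*}:X^*\to X$ that of $X^*$ with gauge $t^{p^*-1}$ (inverse of $J_p$), $J_r^Y$ a single-valued selection of the duality mapping of $Y$ with gauge $t^{r-1}$. Bregman distance: $D_p(x,z)=\tfrac1{p^*}\|x\|^p-\langle J_p(x),z\rangle+\tfrac1p\|z\|^p$. Method: choose $x_0$ with $J_p(x_0)\in\overline{\mathcal{R}(A^* )}$, fix $N\in\mathbb{N}$, $N_n=\min(N,n+1)$. For $n=0,1,\dots$: $w_n=Ax_n-y$, $R_n=\|w_n\|$; stop if $R_n=0$. Else $u_n^*=J_r^Y(w_n)$, $u_n=A^*u_n^*$. Let $s_n$ minimize $s\mapsto\|u_n-\sum_{i=1}^{N_{n-1}}s_iv_{n-1,i}\|^{p^*}$ (empty sum for $n=0$), set $v_{n,N_n}=u_n-\sum_k s_{n,k}v_{n-1,k}$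 with precursor $w^*_{n,N_n}=u_n^*-\sum_k s_{n,k}w^*_{n-1,k}$; $v_{n,1},\dots,v_{n,N_n-1}$ (with precursors) are the last $N_n-1$ entries of the previous list, in order. Offsets $\beta_{n,k}=\langle w^*_{n,k},y\rangle$. $h_n(t)=\tfrac1{p^*}\|J_p(x_n)-\sum_{k=1}^{N_n}t_kv_{n,k}\|^{p^*}+\sum_k t_k\beta_{n,k}$; $t_n$ minimizes $h_n$ and $x_{n+1}=J_{p^*}(J_p(x_n)-\sum_k t_{n,k}v_{n,k})$. *)

theory Defs
  imports "HOL-Analysis.Analysis"
begin

definition conj_exp :: "real \<Rightarrow> real" where
  "conj_exp p = p / (p - 1)"

definition duality_set :: "real \<Rightarrow> 'a::real_normed_vector \<Rightarrow> ('a \<Rightarrow>\<^sub>L real) set" where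
  "duality_set q x = {f. blinfun_apply f x = norm x powr q \<and> norm f = norm x powr (q - 1)}"

text \<open>Duality mapping of the dual space X* with gauge t^(q-1), with X** identified with X
  (X is reflexive, being uniformly convex).\<close>
definition dual_duality_set :: "real \<Rightarrow> ('a::real_normed_vector \<Rightarrow>\<^sub>L real) \<Rightarrow> 'a set" where
  "dual_duality_set q f = {x. blinfun_apply f x = norm f powr q \<and> norm x = norm f powr (q - 1)}"

definition uniformly_convex_space :: "'a::real_normed_vector itself \<Rightarrow> bool" where
  "uniformly_convex_space _ \<longleftrightarrow>
     (\<forall>\<epsilon>. 0 < \<epsilon> \<and> \<epsilon> \<le> 2 \<longrightarrow> (\<exists>\<delta>>0. \<forall>x y::'a. norm x \<le> 1 \<and> norm y \<le> 1 \<and> norm (x - y) \<ge> \<epsilon>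
        \<longrightarrow> norm ((1/2) *\<^sub>R (x + y)) \<le> 1 - \<delta>))"

definition smooth_space :: "'a::real_normed_vector itself \<Rightarrow> bool" where
  "smooth_space _ \<longleftrightarrow>
     (\<forall>x::'a. x \<noteq> 0 \<longrightarrow> (\<exists>!f::'a \<Rightarrow>\<^sub>L real. norm f = 1 \<and> blinfun_apply f x = norm x))"

definition adj :: "('a::real_normed_vector \<Rightarrow>\<^sub>L 'b::real_normed_vector) \<Rightarrow> ('b \<Rightarrow>\<^sub>L real) \<Rightarrow> ('a \<Rightarrow>\<^sub>L real)" where
  "adj A u = u o\<^sub>L A"

definition bregman :: "real \<Rightarrow> ('a::real_normed_vector \<Rightarrow> ('a \<Rightarrow>\<^sub>L real)) \<Rightarrow> 'a \<Rightarrow> 'a \<Rightarrow> real" where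
  "bregman p J x z = (1 / conj_exp p) * norm x powr p - blinfun_apply (J x) z + (1 / p) * norm z powr p"

definition Nn :: "nat \<Rightarrow> nat \<Rightarrow> nat" where
  "Nn N n = min N (n + 1)"

text \<open>h_n(t) = 1/p* ||J_p(x_n) - sum_{k=1}^{m} t_k v_k||^{p*} + sum_k t_k beta_k,
  for t ranging over R^m, represented as nat \<Rightarrow> real (only coordinates 1..m matter).\<close>
definition hfun :: "real \<Rightarrow> ('a::real_normed_vector \<Rightarrow>\<^sub>L real) \<Rightarrow> nat \<Rightarrow> (nat \<Rightarrow> ('a \<Rightarrow>\<^sub>L real))
                     \<Rightarrow> (nat \<Rightarrow> real) \<Rightarrow> (nat \<Rightarrow> real) \<Rightarrow> real" where
  "hfun p Jx m vs \<beta> t =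
     (1 / conj_exp p) * norm (Jx - (\<Sum>k=1..m. t k *\<^sub>R vs k)) powr conj_exp p + (\<Sum>k=1..m. t k * \<beta> k)"

end

theory Submission
  imports Defs
begin

text \<open>
  On the dual space, \<open>F f = \<parallel>f\<parallel>\<^sup>q / q\<close> with \<open>q = p\<^sup>*\<close> has the duality mapping \<open>Jps\<close> as
  subgradient, and uniform convexity makes \<open>Jps\<close> continuous, so \<open>F\<close> has the directional
  derivatives \<open>\<langle>u, Jps f\<rangle>\<close>. Hence the minimiser of \<open>h_(n-1)\<close> is stationary: every search
  direction \<open>v = A\<^sup>* w\<^sup>*\<close> satisfies \<open>\<langle>v, x_n\<rangle> = \<langle>w\<^sup>*, y\<rangle>\<close>, i.e. the old precursors
  annihilate the residual \<open>A x_n - y\<close>. The newest precursor therefore pairs with the residual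
  to \<open>R_n\<^sup>r > 0\<close>, which makes the derivative of \<open>h_n\<close> at \<open>0\<close> in its direction negative, and
  \<open>h_n\<close> decreases strictly. For \<open>z \<in> M\<close> the offsets are the values \<open>\<langle>v, z\<rangle>\<close>, so the Bregman
  distance to \<open>z\<close> changes by exactly \<open>h_n(t_n) - h_n(0)\<close>.
\<close>

lemma dual_duality_set_subgradient:
  fixes f g :: "'a::real_normed_vector \<Rightarrow>\<^sub>L real"
  assumes q: "1 < q" and x: "x \<in> dual_duality_set q f"
  shows "(1/q) * norm f powr q + blinfun_apply (g - f) x \<le> (1/q) * norm g powr q"
proof -
  have fx: "blinfun_apply f x = norm f powr q" and nx: "norm x = norm f powr (q - 1)"
    using x by (auto simp: dual_duality_set_def)
  define q' where "q' = q / (q - 1)"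
  have q'1: "q' > 1" using q by (simp add: q'_def)
  have sum1: "1/q + 1/q' = 1" using q by (simp add: q'_def field_simps)
  have "blinfun_apply g x \<le> norm g * norm x"
    by (metis abs_le_D1 norm_blinfun real_norm_def)
  also have "\<dots> \<le> norm g powr q / q + norm x powr q' / q'"
    by (rule Youngs_inequality[OF q q'1 sum1]) auto
  also have "norm x powr q' = norm f powr q"
    using q by (simp add: nx powr_powr q'_def)
  also have "norm f powr q / q' = norm f powr q - (1/q) * norm f powr q"
  proof -
    have "norm f powr q / q' = norm f powr q * (1/q')" by simp
    also have "1/q' = 1 - 1/q" using sum1 by simp
    finally show ?thesis by (simp add: algebra_simps)
  qed
  finally show ?thesis using fx by (simp add: blinfun.diff_left)
qed

lemma uniformly_convex_space_scaled:
  assumes uc: "uniformly_convex_space TYPE('a::real_normed_vector)" and e: "0 < e" "e \<le> 2"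
  obtains d where "d > 0" and "\<And>(x::'a) y R. 0 < R \<Longrightarrow> norm x \<le> R \<Longrightarrow> norm y \<le> R
      \<Longrightarrow> e * R \<le> norm (x - y) \<Longrightarrow> norm ((1/2) *\<^sub>R (x + y)) \<le> (1 - d) * R"
proof -
  obtain d where d: "d > 0" and unit: "\<And>x y::'a. norm x \<le> 1 \<Longrightarrow> norm y \<le> 1 \<Longrightarrow> e \<le> norm (x - y)
        \<Longrightarrow> norm ((1/2) *\<^sub>R (x + y)) \<le> 1 - d"
    using uc e unfolding uniformly_convex_space_def by meson
  have "norm ((1/2) *\<^sub>R (x + y)) \<le> (1 - d) * R"
    if R: "0 < R" and "norm x \<le> R" "norm y \<le> R" "e * R \<le> norm (x - y)" for x y :: 'a and R
  proof -
    have norm_scaled: "norm ((1/R) *\<^sub>R z) = norm z / R" for z :: 'a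
      using R by simp
    have "(1/R) *\<^sub>R x - (1/R) *\<^sub>R y = (1/R) *\<^sub>R (x - y)"
      by (simp add: scaleR_diff_right)
    then have "norm ((1/2) *\<^sub>R ((1/R) *\<^sub>R x + (1/R) *\<^sub>R y)) \<le> 1 - d"
      using that by (intro unit) (simp_all only: norm_scaled, simp_all add: le_divide_eq)
    also have "(1/2) *\<^sub>R ((1/R) *\<^sub>R x + (1/R) *\<^sub>R y) = (1/R) *\<^sub>R ((1/2) *\<^sub>R (x + y))"
      by (simp add: scaleR_add_right mult.commute)
    finally show ?thesis
      using R unfolding norm_scaled by (simp add: divide_le_eq)
  qed
  with d that show ?thesis by blast
qed

lemma uniformly_convex_tendsto_of_midpoint_norm:
  fixes X :: "'b \<Rightarrow> 'a::real_normed_vector"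
  assumes uc: "uniformly_convex_space TYPE('a)"
    and norm_X: "((\<lambda>t. norm (X t)) \<longlongrightarrow> norm x0) F"
    and norm_mid: "((\<lambda>t. norm ((1/2) *\<^sub>R (X t + x0))) \<longlongrightarrow> norm x0) F"
  shows "(X \<longlongrightarrow> x0) F"
proof (cases "x0 = 0")
  case True
  then show ?thesis using norm_X by (simp add: tendsto_norm_zero_iff)
next
  case False
  define \<rho> where "\<rho> = norm x0"
  have \<rho>: "\<rho> > 0" using False by (simp add: \<rho>_def)
  show ?thesis
    unfolding tendsto_iff
  proof (intro allI impI)
    fix \<epsilon> :: real assume \<epsilon>: "\<epsilon> > 0"
    define e where "e = min (\<epsilon> / (2 * \<rho>)) 2"
    have e: "0 < e" "e \<le> 2" using \<epsilon> \<rho> by (auto simp: e_def)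
    obtain d where d: "d > 0" and uc_R: "\<And>(x::'a) y R. 0 < R \<Longrightarrow> norm x \<le> R \<Longrightarrow> norm y \<le> R
        \<Longrightarrow> e * R \<le> norm (x - y) \<Longrightarrow> norm ((1/2) *\<^sub>R (x + y)) \<le> (1 - d) * R"
      using uniformly_convex_space_scaled[OF uc e] by blast
    define R where "R t = max (norm (X t)) \<rho>" for t
    have R: "(R \<longlongrightarrow> \<rho>) F"
      unfolding R_def using tendsto_max[OF norm_X tendsto_const, of \<rho>] by (simp add: \<rho>_def)
    have "((\<lambda>t. norm ((1/2) *\<^sub>R (X t + x0)) - (1 - d) * R t) \<longlongrightarrow> \<rho> - (1 - d) * \<rho>) F"
      by (intro tendsto_intros R) (use norm_mid in \<open>simp add: \<rho>_def\<close>)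
    then have "\<forall>\<^sub>F t in F. 0 < norm ((1/2) *\<^sub>R (X t + x0)) - (1 - d) * R t"
      by (rule order_tendstoD(1)) (use \<rho> d in simp)
    then have mid_large: "\<forall>\<^sub>F t in F. (1 - d) * R t < norm ((1/2) *\<^sub>R (X t + x0))"
      by (rule eventually_mono) simp
    have R_small: "\<forall>\<^sub>F t in F. R t < 2 * \<rho>"
      using order_tendstoD(2)[OF R] \<rho> by simp
    show "\<forall>\<^sub>F t in F. dist (X t) x0 < \<epsilon>"
      using mid_large R_small
    proof eventually_elim
      case (elim t)
      have R_pos: "R t > 0" using \<rho> by (simp add: R_def)
      have "norm (X t - x0) < e * R t"
        using uc_R[OF R_pos, of "X t" x0] elim(1) by (force simp: R_def \<rho>_def)
      also have "e * R t \<le> \<epsilon> / (2 * \<rho>) * R t"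
        using R_pos by (intro mult_right_mono) (auto simp: e_def)
      also have "\<dots> < \<epsilon> / (2 * \<rho>) * (2 * \<rho>)"
        using elim(2) \<epsilon> \<rho> by (intro mult_strict_left_mono) auto
      finally show ?case using \<rho> by (simp add: dist_norm)
    qed
  qed
qed

lemma dual_duality_map_continuous:
  fixes Jps :: "('a::real_normed_vector \<Rightarrow>\<^sub>L real) \<Rightarrow> 'a"
  assumes uc: "uniformly_convex_space TYPE('a)" and q: "1 < q"
    and Jps: "\<forall>f. Jps f \<in> dual_duality_set q f"
    and g: "(g \<longlongrightarrow> f0) F"
  shows "((\<lambda>t. Jps (g t)) \<longlongrightarrow> Jps f0) F"
proof -
  have norm_Jps: "norm (Jps f) = norm f powr (q - 1)" for f
    using Jps by (auto simp: dual_duality_set_def)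
  have apply_Jps: "blinfun_apply f (Jps f) = norm f powr q" for f
    using Jps by (auto simp: dual_duality_set_def)
  have norm_g: "((\<lambda>t. norm (g t)) \<longlongrightarrow> norm f0) F"
    using g by (rule tendsto_norm)
  have norm_Jps_g: "((\<lambda>t. norm (Jps (g t))) \<longlongrightarrow> norm (Jps f0)) F"
    unfolding norm_Jps using q by (intro tendsto_powr2[OF norm_g tendsto_const]) auto
  show ?thesis
  proof (cases "f0 = 0")
    case True
    then show ?thesis
      using norm_Jps_g norm_Jps[of 0] q by (simp add: tendsto_norm_zero_iff)
  next
    case False
    define c where "c = norm f0"
    have c: "c > 0" using False by (simp add: c_def)
    have "((\<lambda>t. blinfun_apply (g t - f0) (Jps (g t))) \<longlongrightarrow> 0) F"
    proof (rule Lim_null_comparison)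
      show "\<forall>\<^sub>F t in F. norm (blinfun_apply (g t - f0) (Jps (g t))) \<le> norm (g t - f0) * norm (Jps (g t))"
        by (intro always_eventually allI norm_blinfun)
      have "((\<lambda>t. norm (g t - f0)) \<longlongrightarrow> 0) F"
        using g by (simp add: LIM_zero tendsto_norm_zero_iff)
      from tendsto_mult[OF this norm_Jps_g]
      show "((\<lambda>t. norm (g t - f0) * norm (Jps (g t))) \<longlongrightarrow> 0) F" by simp
    qed
    moreover have "((\<lambda>t. blinfun_apply (g t) (Jps (g t))) \<longlongrightarrow> c powr q) F"
      unfolding apply_Jps c_def using q by (intro tendsto_powr2[OF norm_g tendsto_const]) auto
    ultimately have "((\<lambda>t. blinfun_apply (g t) (Jps (g t)) - blinfun_apply (g t - f0) (Jps (g t)))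
        \<longlongrightarrow> c powr q - 0) F"
      by (intro tendsto_diff)
    then have f0_Jps_g: "((\<lambda>t. blinfun_apply f0 (Jps (g t))) \<longlongrightarrow> c powr q) F"
      by (simp add: blinfun.diff_left)
    define mid where "mid t = (1/2) *\<^sub>R (Jps (g t) + Jps f0)" for t
    have "((\<lambda>t. (1/2) * (blinfun_apply f0 (Jps (g t)) + c powr q)) \<longlongrightarrow> (1/2) * (c powr q + c powr q)) F"
      by (intro tendsto_intros f0_Jps_g)
    then have "((\<lambda>t. blinfun_apply f0 (mid t)) \<longlongrightarrow> c powr q) F"
      by (simp add: mid_def blinfun.scaleR_right blinfun.add_right apply_Jps c_def)
    then have "((\<lambda>t. blinfun_apply f0 (mid t) / c) \<longlongrightarrow> c powr q / c) F"
      using c by (intro tendsto_divide tendsto_const) auto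
    also have "c powr q / c = norm (Jps f0)"
      using c by (simp add: norm_Jps c_def powr_diff)
    finally have lower: "((\<lambda>t. blinfun_apply f0 (mid t) / c) \<longlongrightarrow> norm (Jps f0)) F" .
    have "((\<lambda>t. (norm (Jps (g t)) + norm (Jps f0)) / 2) \<longlongrightarrow> (norm (Jps f0) + norm (Jps f0)) / 2) F"
      by (intro tendsto_divide tendsto_add norm_Jps_g tendsto_const) simp
    then have upper: "((\<lambda>t. (norm (Jps (g t)) + norm (Jps f0)) / 2) \<longlongrightarrow> norm (Jps f0)) F"
      by simp
    have lower_le: "blinfun_apply f0 (mid t) / c \<le> norm (mid t)" for t
      using c norm_blinfun[of f0 "mid t"] by (simp add: divide_le_eq c_def mult.commute)
    have le_upper: "norm (mid t) \<le> (norm (Jps (g t)) + norm (Jps f0)) / 2" for t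
      using norm_triangle_ineq[of "Jps (g t)" "Jps f0"] by (simp add: mid_def)
    have "((\<lambda>t. norm (mid t)) \<longlongrightarrow> norm (Jps f0)) F"
      by (rule tendsto_sandwich[OF always_eventually always_eventually lower upper])
        (use lower_le le_upper in blast)+
    then show ?thesis
      by (intro uniformly_convex_tendsto_of_midpoint_norm[OF uc norm_Jps_g]) (simp add: mid_def)
  qed
qed

text \<open>The difference quotient is squeezed between the subgradient inequalities at \<open>f0\<close> and at
  \<open>f0 + \<delta> u\<close>; the upper bound converges by continuity of \<open>Jps\<close>.\<close>

lemma dual_norm_power_right_derivative:
  fixes Jps :: "('a::real_normed_vector \<Rightarrow>\<^sub>L real) \<Rightarrow> 'a"
  assumes uc: "uniformly_convex_space TYPE('a)" and q: "1 < q"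
    and Jps: "\<forall>f. Jps f \<in> dual_duality_set q f"
  shows "((\<lambda>\<delta>. ((1/q) * norm (f0 + \<delta> *\<^sub>R u) powr q - (1/q) * norm f0 powr q) / \<delta>)
          \<longlongrightarrow> blinfun_apply u (Jps f0)) (at_right 0)"
proof (rule tendsto_sandwich)
  show "\<forall>\<^sub>F \<delta> in at_right 0. blinfun_apply u (Jps f0)
      \<le> ((1/q) * norm (f0 + \<delta> *\<^sub>R u) powr q - (1/q) * norm f0 powr q) / \<delta>"
    using eventually_at_right_less[of "0::real"]
  proof eventually_elim
    case (elim \<delta>)
    have "(1/q) * norm f0 powr q + blinfun_apply (f0 + \<delta> *\<^sub>R u - f0) (Jps f0)
        \<le> (1/q) * norm (f0 + \<delta> *\<^sub>R u) powr q"
      using Jps by (intro dual_duality_set_subgradient q) auto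
    then have "\<delta> * blinfun_apply u (Jps f0) \<le> (1/q) * norm (f0 + \<delta> *\<^sub>R u) powr q - (1/q) * norm f0 powr q"
      by (simp add: blinfun.scaleR_left)
    then show ?case using elim by (simp add: le_divide_eq mult.commute)
  qed
  show "\<forall>\<^sub>F \<delta> in at_right 0. ((1/q) * norm (f0 + \<delta> *\<^sub>R u) powr q - (1/q) * norm f0 powr q) / \<delta>
      \<le> blinfun_apply u (Jps (f0 + \<delta> *\<^sub>R u))"
    using eventually_at_right_less[of "0::real"]
  proof eventually_elim
    case (elim \<delta>)
    have "(1/q) * norm (f0 + \<delta> *\<^sub>R u) powr q + blinfun_apply (f0 - (f0 + \<delta> *\<^sub>R u)) (Jps (f0 + \<delta> *\<^sub>R u))
        \<le> (1/q) * norm f0 powr q"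
      using Jps by (intro dual_duality_set_subgradient q) auto
    then have "(1/q) * norm (f0 + \<delta> *\<^sub>R u) powr q - (1/q) * norm f0 powr q \<le> \<delta> * blinfun_apply u (Jps (f0 + \<delta> *\<^sub>R u))"
      by (simp add: blinfun.scaleR_left blinfun.minus_left)
    then show ?case using elim by (simp add: divide_le_eq mult.commute)
  qed
  have "((\<lambda>\<delta>::real. f0 + \<delta> *\<^sub>R u) \<longlongrightarrow> f0 + 0 *\<^sub>R u) (at_right 0)"
    by (intro tendsto_intros tendsto_ident_at)
  then have "((\<lambda>\<delta>::real. f0 + \<delta> *\<^sub>R u) \<longlongrightarrow> f0) (at_right 0)"
    by simp
  from dual_duality_map_continuous[OF uc q Jps this]
  show "((\<lambda>\<delta>. blinfun_apply u (Jps (f0 + \<delta> *\<^sub>R u))) \<longlongrightarrow> blinfun_apply u (Jps f0)) (at_right 0)"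
    by (intro blinfun.tendsto tendsto_const)
qed simp

lemma dual_norm_power_descent:
  fixes Jps :: "('a::real_normed_vector \<Rightarrow>\<^sub>L real) \<Rightarrow> 'a"
  assumes uc: "uniformly_convex_space TYPE('a)" and q: "1 < q"
    and Jps: "\<forall>f. Jps f \<in> dual_duality_set q f"
    and slope: "blinfun_apply u (Jps f0) + b < 0"
  obtains \<delta> where "\<delta> > 0" and "(1/q) * norm (f0 + \<delta> *\<^sub>R u) powr q + \<delta> * b < (1/q) * norm f0 powr q"
proof -
  have "((\<lambda>\<delta>. ((1/q) * norm (f0 + \<delta> *\<^sub>R u) powr q - (1/q) * norm f0 powr q) / \<delta> + b)
          \<longlongrightarrow> blinfun_apply u (Jps f0) + b) (at_right 0)"
    by (intro tendsto_add dual_norm_power_right_derivative[OF uc q Jps] tendsto_const)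
  from order_tendstoD(2)[OF this slope]
  have "\<forall>\<^sub>F \<delta> in at_right 0. 0 < \<delta> \<and>
      ((1/q) * norm (f0 + \<delta> *\<^sub>R u) powr q - (1/q) * norm f0 powr q) / \<delta> + b < 0"
    using eventually_at_right_less[of "0::real"] by eventually_elim auto
  then obtain \<delta> where \<delta>: "0 < \<delta>"
    and "((1/q) * norm (f0 + \<delta> *\<^sub>R u) powr q - (1/q) * norm f0 powr q) / \<delta> + b < 0"
    using eventually_happens[of _ "at_right (0::real)"] by auto
  then have "((1/q) * norm (f0 + \<delta> *\<^sub>R u) powr q - (1/q) * norm f0 powr q) / \<delta> < - b"
    by simp
  then have "(1/q) * norm (f0 + \<delta> *\<^sub>R u) powr q - (1/q) * norm f0 powr q < - b * \<delta>"
    using \<delta> by (simp add: divide_less_eq)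
  with \<delta> that show ?thesis by (simp add: algebra_simps)
qed

lemma dual_norm_power_first_order:
  fixes Jps :: "('a::real_normed_vector \<Rightarrow>\<^sub>L real) \<Rightarrow> 'a"
  assumes uc: "uniformly_convex_space TYPE('a)" and q: "1 < q"
    and Jps: "\<forall>f. Jps f \<in> dual_duality_set q f"
    and no_descent: "\<And>\<delta>. 0 < \<delta> \<Longrightarrow> (1/q) * norm f0 powr q \<le> (1/q) * norm (f0 + \<delta> *\<^sub>R u) powr q + \<delta> * b"
  shows "0 \<le> blinfun_apply u (Jps f0) + b"
proof (rule ccontr)
  assume "\<not> 0 \<le> blinfun_apply u (Jps f0) + b"
  then obtain \<delta> where "\<delta> > 0" and "(1/q) * norm (f0 + \<delta> *\<^sub>R u) powr q + \<delta> * b < (1/q) * norm f0 powr q"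
    using dual_norm_power_descent[OF uc q Jps] by (metis not_le)
  with no_descent show False by (meson not_le)
qed

lemma conj_exp_gt_one: "1 < p \<Longrightarrow> 1 < conj_exp p"
  by (simp add: conj_exp_def)

lemma bregman_dual_form:
  assumes p: "1 < p" and J: "J x \<in> duality_set p x"
  shows "bregman p J x z
    = (1 / conj_exp p) * norm (J x) powr conj_exp p - blinfun_apply (J x) z + (1/p) * norm z powr p"
proof -
  have "norm (J x) = norm x powr (p - 1)" using J by (simp add: duality_set_def)
  moreover have "(p - 1) * conj_exp p = p" using p by (simp add: conj_exp_def)
  ultimately have "norm (J x) powr conj_exp p = norm x powr p" by (simp add: powr_powr)
  then show ?thesis by (simp add: bregman_def)
qed

lemma adj_apply: "blinfun_apply (adj A u) z = blinfun_apply u (blinfun_apply A z)"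
  by (simp add: adj_def)

lemma adj_diff_sum:
  "adj A (a - (\<Sum>k\<in>S. c k *\<^sub>R b k)) = adj A a - (\<Sum>k\<in>S. c k *\<^sub>R adj A (b k))"
  by (rule blinfun_eqI) (simp add: adj_apply blinfun.diff_left blinfun.sum_left blinfun.scaleR_left)

lemma hfun_add_coordinate:
  assumes k: "k \<in> {1..m}"
  shows "hfun p Jx m vs \<beta> (\<lambda>i. \<tau> i + (if i = k then d else 0))
     = (1 / conj_exp p) * norm ((Jx - (\<Sum>i=1..m. \<tau> i *\<^sub>R vs i)) + (-d) *\<^sub>R vs k) powr conj_exp p
       + (\<Sum>i=1..m. \<tau> i * \<beta> i) + d * \<beta> k"
proof -
  have "(\<Sum>i=1..m. (\<tau> i + (if i = k then d else 0)) *\<^sub>R vs i) = (\<Sum>i=1..m. \<tau> i *\<^sub>R vs i) + d *\<^sub>R vs k"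
    using k by (simp add: scaleR_add_left sum.distrib if_distrib[of "\<lambda>c. c *\<^sub>R vs _"] sum.delta
      cong: if_cong)
  moreover have "(\<Sum>i=1..m. (\<tau> i + (if i = k then d else 0)) * \<beta> i) = (\<Sum>i=1..m. \<tau> i * \<beta> i) + d * \<beta> k"
    using k by (simp add: distrib_right sum.distrib if_distrib[of "\<lambda>c. c * \<beta> _"] sum.delta
      cong: if_cong)
  ultimately show ?thesis
    by (simp add: hfun_def algebra_simps)
qed

lemma hfun_minimizer_stationary:
  fixes Jps :: "('a::real_normed_vector \<Rightarrow>\<^sub>L real) \<Rightarrow> 'a"
  assumes uc: "uniformly_convex_space TYPE('a)" and p: "1 < p"
    and Jps: "\<forall>f. Jps f \<in> dual_duality_set (conj_exp p) f"
    and minimal: "\<And>\<tau>. hfun p Jx m vs \<beta> t \<le> hfun p Jx m vs \<beta> \<tau>"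
    and k: "k \<in> {1..m}"
  shows "blinfun_apply (vs k) (Jps (Jx - (\<Sum>i=1..m. t i *\<^sub>R vs i))) = \<beta> k"
proof -
  define q where "q = conj_exp p"
  define f where "f = Jx - (\<Sum>i=1..m. t i *\<^sub>R vs i)"
  have q: "1 < q" using p by (simp add: q_def conj_exp_gt_one)
  have Jps_q: "\<forall>f. Jps f \<in> dual_duality_set q f" using Jps by (simp add: q_def)
  have shifted: "(1/q) * norm f powr q \<le> (1/q) * norm (f + (-d) *\<^sub>R vs k) powr q + d * \<beta> k" for d
    using minimal[of "\<lambda>i. t i + (if i = k then d else 0)"]
    unfolding hfun_add_coordinate[OF k] by (simp add: hfun_def q_def f_def)
  have "0 \<le> blinfun_apply (- vs k) (Jps f) + \<beta> k"
    by (rule dual_norm_power_first_order[OF uc q Jps_q]) (use shifted in simp)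
  moreover have "0 \<le> blinfun_apply (vs k) (Jps f) + - \<beta> k"
    by (rule dual_norm_power_first_order[OF uc q Jps_q]) (use shifted[of "- _"] in simp)
  ultimately have "blinfun_apply (vs k) (Jps f) = \<beta> k"
    by (simp add: blinfun.minus_left)
  then show ?thesis by (simp add: f_def)
qed

lemma hfun_decrease_from_zero:
  fixes Jps :: "('a::real_normed_vector \<Rightarrow>\<^sub>L real) \<Rightarrow> 'a"
  assumes uc: "uniformly_convex_space TYPE('a)" and p: "1 < p"
    and Jps: "\<forall>f. Jps f \<in> dual_duality_set (conj_exp p) f"
    and k: "k \<in> {1..m}" and slope: "\<beta> k < blinfun_apply (vs k) (Jps Jx)"
  obtains t where "hfun p Jx m vs \<beta> t < hfun p Jx m vs \<beta> (\<lambda>_. 0)"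
proof -
  have "blinfun_apply (- vs k) (Jps Jx) + \<beta> k < 0"
    using slope by (simp add: blinfun.minus_left)
  then obtain \<delta> where "(1 / conj_exp p) * norm (Jx + \<delta> *\<^sub>R (- vs k)) powr conj_exp p + \<delta> * \<beta> k
      < (1 / conj_exp p) * norm Jx powr conj_exp p"
    using dual_norm_power_descent[OF uc conj_exp_gt_one[OF p] Jps] by blast
  then have "hfun p Jx m vs \<beta> (\<lambda>i. 0 + (if i = k then \<delta> else 0)) < hfun p Jx m vs \<beta> (\<lambda>_. 0)"
    unfolding hfun_add_coordinate[OF k] by (simp add: hfun_def)
  then show ?thesis by (rule that)
qed

lemma bregman_diff_eq_hfun_diff:
  assumes p: "1 < p" and J: "J x \<in> duality_set p x" and J': "J x' \<in> duality_set p x'"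
    and step: "J x' = J x - (\<Sum>k=1..m. t k *\<^sub>R vs k)"
    and offsets: "\<forall>k\<in>{1..m}. blinfun_apply (vs k) z = \<beta> k"
  shows "bregman p J x' z - bregman p J x z = hfun p (J x) m vs \<beta> t - hfun p (J x) m vs \<beta> (\<lambda>_. 0)"
proof -
  have "blinfun_apply (J x') z = blinfun_apply (J x) z - (\<Sum>k=1..m. t k * \<beta> k)"
    using offsets by (simp add: step blinfun.diff_left blinfun.sum_left blinfun.scaleR_left)
  then show ?thesis
    by (simp add: bregman_dual_form[where J = J, OF p J] bregman_dual_form[where J = J, OF p J'] hfun_def step)
qed

lemma search_directions_adjoint:
  assumes N: "1 \<le> N"
    and v_new: "\<forall>j\<le>n. v j (Nn N j) = adj A (c j) - (\<Sum>k=1..min N j. s j k *\<^sub>R v (j - 1) k)"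
    and w_new: "\<forall>j\<le>n. w j (Nn N j) = c j - (\<Sum>k=1..min N j. s j k *\<^sub>R w (j - 1) k)"
    and v_shift: "\<forall>j\<le>n. \<forall>k. 1 \<le> k \<and> k < Nn N j \<longrightarrow> v j k = v (j - 1) (k + min N j + 1 - Nn N j)"
    and w_shift: "\<forall>j\<le>n. \<forall>k. 1 \<le> k \<and> k < Nn N j \<longrightarrow> w j k = w (j - 1) (k + min N j + 1 - Nn N j)"
  shows "j \<le> n \<Longrightarrow> k \<in> {1..Nn N j} \<Longrightarrow> v j k = adj A (w j k)"
proof (induction j arbitrary: k)
  case 0
  then have "k = Nn N 0" using N by (simp add: Nn_def)
  then show ?case using v_new[rule_format, of 0] w_new[rule_format, of 0] by (simp add: adj_diff_sum)
next
  case (Suc j)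
  have min_N: "min N (Suc j) = Nn N j" by (simp add: Nn_def)
  show ?case
  proof (cases "k = Nn N (Suc j)")
    case True
    have "(\<Sum>i=1..Nn N j. s (Suc j) i *\<^sub>R v j i) = (\<Sum>i=1..Nn N j. s (Suc j) i *\<^sub>R adj A (w j i))"
      using Suc by (intro sum.cong) auto
    then show ?thesis
      using True v_new[rule_format, OF Suc.prems(1)] w_new[rule_format, OF Suc.prems(1)]
      by (simp add: min_N adj_diff_sum)
  next
    case False
    define k' where "k' = k + min N (Suc j) + 1 - Nn N (Suc j)"
    have "k' \<in> {1..Nn N j}" using Suc.prems False by (auto simp: k'_def Nn_def)
    moreover have "k < Nn N (Suc j)" using Suc.prems False by auto
    ultimately show ?thesis
      using Suc v_shift[rule_format, OF Suc.prems(1)] w_shift[rule_format, OF Suc.prems(1)]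
      by (simp add: k'_def)
  qed
qed

lemma hfun_minimizer_bregman_decrease:
  fixes Jps :: "('a::real_normed_vector \<Rightarrow>\<^sub>L real) \<Rightarrow> 'a"
  assumes uc: "uniformly_convex_space TYPE('a)" and p: "1 < p"
    and Jps: "\<forall>f. Jps f \<in> dual_duality_set (conj_exp p) f"
    and J: "\<forall>z. J z \<in> duality_set p z" and J_Jps: "\<forall>f. J (Jps f) = f"
    and minimal: "\<And>\<tau>. hfun p (J x) m vs \<beta> t \<le> hfun p (J x) m vs \<beta> \<tau>"
    and step: "x' = Jps (J x - (\<Sum>k=1..m. t k *\<^sub>R vs k))"
    and offsets: "\<forall>z\<in>M. \<forall>k\<in>{1..m}. blinfun_apply (vs k) z = \<beta> k"
    and k: "k \<in> {1..m}" and slope: "\<beta> k < blinfun_apply (vs k) (Jps (J x))"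
  shows "\<exists>t S. 0 < S \<and> hfun p (J x) m vs \<beta> t \<le> hfun p (J x) m vs \<beta> (\<lambda>_. 0) - S
    \<and> (\<forall>z\<in>M. bregman p J x' z \<le> bregman p J x z - S)"
proof -
  obtain t' where "hfun p (J x) m vs \<beta> t' < hfun p (J x) m vs \<beta> (\<lambda>_. 0)"
    using hfun_decrease_from_zero[where \<beta> = \<beta> and vs = vs and Jx = "J x", OF uc p Jps k slope] .
  define S where "S = hfun p (J x) m vs \<beta> (\<lambda>_. 0) - hfun p (J x) m vs \<beta> t"
  have "0 < S"
    using order_le_less_trans[OF minimal \<open>hfun p (J x) m vs \<beta> t' < _\<close>]
    by (simp add: S_def)
  moreover have "bregman p J x' z \<le> bregman p J x z - S" if "z \<in> M" for z
  proof -
    have "J x' = J x - (\<Sum>k=1..m. t k *\<^sub>R vs k)"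
      using J_Jps by (simp add: step)
    then have "bregman p J x' z - bregman p J x z
        = hfun p (J x) m vs \<beta> t - hfun p (J x) m vs \<beta> (\<lambda>_. 0)"
      using offsets that by (intro bregman_diff_eq_hfun_diff[where J = J, OF p J[rule_format] J[rule_format]]) auto
    then show ?thesis by (simp add: S_def)
  qed
  ultimately show ?thesis
    by (intro exI[of _ t] exI[of _ S]) (simp add: S_def)
qed

theorem mainTheorem2:
  fixes A :: "'a::banach \<Rightarrow>\<^sub>L 'b::banach"
    and y :: 'b
    and p r :: real
    and J :: "'a \<Rightarrow> ('a \<Rightarrow>\<^sub>L real)"
    and Jps :: "('a \<Rightarrow>\<^sub>L real) \<Rightarrow> 'a"
    and Jr :: "'b \<Rightarrow> ('b \<Rightarrow>\<^sub>L real)"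
    and N n :: nat
    and x :: "nat \<Rightarrow> 'a"
    and s tt :: "nat \<Rightarrow> nat \<Rightarrow> real"
    and v :: "nat \<Rightarrow> nat \<Rightarrow> ('a \<Rightarrow>\<^sub>L real)"
    and w :: "nat \<Rightarrow> nat \<Rightarrow> ('b \<Rightarrow>\<^sub>L real)"
  assumes smooth: "smooth_space TYPE('a)"
    and unif_conv: "uniformly_convex_space TYPE('a)"
    and y_range: "y \<in> range (blinfun_apply A)"
    and p_gt: "1 < p" and r_gt: "1 < r"
    and J_dual: "\<forall>z. J z \<in> duality_set p z"
    and Jps_dual: "\<forall>f. Jps f \<in> dual_duality_set (conj_exp p) f"
    and Jps_J: "\<forall>z. Jps (J z) = z"
    and J_Jps: "\<forall>f. J (Jps f) = f"
    and Jr_dual: "\<forall>u. Jr u \<in> duality_set r u"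
    and N_pos: "1 \<le> N"
    and x0: "J (x 0) \<in> closure (range (adj A))"
    and not_stopped: "\<forall>j\<le>n. blinfun_apply A (x j) - y \<noteq> 0"
    and s_min: "\<forall>j\<le>n. \<forall>\<sigma>::nat \<Rightarrow> real.
        norm (adj A (Jr (blinfun_apply A (x j) - y)) - (\<Sum>k=1..min N j. s j k *\<^sub>R v (j - 1) k)) powr conj_exp p
        \<le> norm (adj A (Jr (blinfun_apply A (x j) - y)) - (\<Sum>k=1..min N j. \<sigma> k *\<^sub>R v (j - 1) k)) powr conj_exp p"
    and v_new: "\<forall>j\<le>n. v j (Nn N j) =
        adj A (Jr (blinfun_apply A (x j) - y)) - (\<Sum>k=1..min N j. s j k *\<^sub>R v (j - 1) k)"
    and w_new: "\<forall>j\<le>n. w j (Nn N j) =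
        Jr (blinfun_apply A (x j) - y) - (\<Sum>k=1..min N j. s j k *\<^sub>R w (j - 1) k)"
    and v_shift: "\<forall>j\<le>n. \<forall>k. 1 \<le> k \<and> k < Nn N j \<longrightarrow> v j k = v (j - 1) (k + min N j + 1 - Nn N j)"
    and w_shift: "\<forall>j\<le>n. \<forall>k. 1 \<le> k \<and> k < Nn N j \<longrightarrow> w j k = w (j - 1) (k + min N j + 1 - Nn N j)"
    and t_min: "\<forall>j\<le>n. \<forall>\<tau>::nat \<Rightarrow> real.
        hfun p (J (x j)) (Nn N j) (v j) (\<lambda>k. blinfun_apply (w j k) y) (tt j)
        \<le> hfun p (J (x j)) (Nn N j) (v j) (\<lambda>k. blinfun_apply (w j k) y) \<tau>"
    and x_next: "\<forall>j\<le>n. x (Suc j) = Jps (J (x j) - (\<Sum>k=1..Nn N j. tt j k *\<^sub>R v j k))"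
  shows "\<exists>(t::nat \<Rightarrow> real) S. 0 < S \<and>
           hfun p (J (x n)) (Nn N n) (v n) (\<lambda>k. blinfun_apply (w n k) y) t
             \<le> hfun p (J (x n)) (Nn N n) (v n) (\<lambda>k. blinfun_apply (w n k) y) (\<lambda>_. 0) - S \<and>
           (\<forall>z. blinfun_apply A z = y \<longrightarrow> bregman p J (x (Suc n)) z \<le> bregman p J (x n) z - S)"
proof -
  have adjoint: "\<And>j k. j \<le> n \<Longrightarrow> k \<in> {1..Nn N j} \<Longrightarrow> v j k = adj A (w j k)"
    by (rule search_directions_adjoint[OF N_pos v_new w_new v_shift w_shift])
  define res where "res = blinfun_apply A (x n) - y"
  have old_orthogonal: "blinfun_apply (w (n - 1) k) res = 0" if "0 < n" and "k \<in> {1..min N n}" for k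
  proof -
    have "Nn N (n - 1) = min N n" and "Suc (n - 1) = n" using that by (auto simp: Nn_def)
    then have "blinfun_apply (v (n - 1) k) (x n) = blinfun_apply (w (n - 1) k) y"
      using hfun_minimizer_stationary[OF unif_conv p_gt Jps_dual t_min[rule_format, of "n - 1", OF diff_le_self]]
        x_next[rule_format, of "n - 1"] that by simp
    then show ?thesis
      using adjoint[of "n - 1" k] that by (simp add: adj_apply res_def blinfun.diff_right Nn_def)
  qed
  have "blinfun_apply (w n (Nn N n)) res = norm res powr r"
    using w_new[rule_format, of n] old_orthogonal Jr_dual
    by (simp add: res_def duality_set_def blinfun.diff_left blinfun.sum_left blinfun.scaleR_left)
  also have "norm res powr r > 0"
    using not_stopped by (simp add: res_def)
  finally have slope: "blinfun_apply (w n (Nn N n)) y < blinfun_apply (v n (Nn N n)) (Jps (J (x n)))"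
    using adjoint[of n "Nn N n"] N_pos Jps_J by (simp add: res_def adj_apply Nn_def blinfun.diff_right)
  have offsets: "\<forall>z\<in>{z. blinfun_apply A z = y}. \<forall>k\<in>{1..Nn N n}.
      blinfun_apply (v n k) z = blinfun_apply (w n k) y"
    using adjoint by (simp add: adj_apply)
  show ?thesis
    using hfun_minimizer_bregman_decrease[OF unif_conv p_gt Jps_dual J_dual J_Jps
        t_min[rule_format, OF order_refl] x_next[rule_format, OF order_refl] offsets _ slope] N_pos
    by (simp add: Nn_def)
qed

end
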